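(* For any valid scheme (satisfying (C1)–(C8)), any database $n$, any message index $k$, and any $\mathcal{R}_U$, \[ 0\ \ge\ H\big(A_n^{[k,\mathcal{R}_U]}\mid Q_n^{[k,\mathcal{R}_U]},\mathcal{R}_U\big)-H(\mathcal{R}_S). \]
   Context: Model (SPIR with user-side common randomness). There are $N\ge1$ non-colluding databases, each storing the same $K\ge2$ messages $W_1,\dots,W_K$. Each message consists of $L$ i.i.d. symbols uniform over a sufficiently large finite field $\mathbb{F}_q$; entropies are in $q$-ary units, so $H(W_k)=L$ and $H(W_{1:K})=KL$. The databases share server-side common randomness $\mathcal{R}_S$, unknown to the user. The user holds user-side common randomness $\mathcal{R}_U$, a subset of the components of $\mathcal{R}_S$, unknown to the databases except for its size (uniform over subsets of given cardinality). $\mathcal{F}$ is the user's retrieval-strategy randomness. To retrieve $W_k$ the user sends $Q_n^{[k,\mathcal{R}_U]}$ to database $n$, receiving $A_n^{[k,\mathcal{R}_U]}$; $W_{\bar k}=\{W_j:j\ne k\}$. A valid scheme satisfies for all $k,n,\mathcal{R}_U$: (C1) $I(W_{1:K};k,\mathcal{F},\mathcal{R}_S,\mathcal{R}_U)=0$; (C2) $I(Q_{1:N}^{[k,\mathcal{R}_U]};W_{1:K},\mathcal{R}_S\setminus\mathcal{R}_U)=0$; (C3) $H(Q_{1:N}^{[k,\mathcal{R}_U]}\mid\mathcal{F})=0$; (C4) $H(A_n^{[k,\mathcal{R}_U]}\mid Q_n^{[k,\mathcal{R}_U]},W_{1:K},\mathcal{R}_S)=0$; (C5) $H(W_k\mid\mathcal{F},A_{1:N}^{[k,\mathcal{R}_U]},\mathcal{R}_U)=0$;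 (C6) user privacy: for all $k,k',n,\mathcal{R}_U$ there is $\mathcal{R}_U'$ with $H(\mathcal{R}_U')=H(\mathcal{R}_U)$ and $(Q_n^{[k,\mathcal{R}_U]},A_n^{[k,\mathcal{R}_U]},W_{1:K},\mathcal{R}_S)\sim(Q_n^{[k',\mathcal{R}_U']},A_n^{[k',\mathcal{R}_U']},W_{1:K},\mathcal{R}_S)$; (C7) $I(W_{\bar k};\mathcal{F},A_{1:N}^{[k,\mathcal{R}_U]},\mathcal{R}_U)=0$; (C8) $I(\mathcal{R}_S\setminus\mathcal{R}_U;\mathcal{F},A_{1:N}^{[k,\mathcal{R}_U]},W_k,\mathcal{R}_U)=0$. *)

theory Defs
  imports "HOL-Probability.Probability"
begin

definition Ent :: "'a measure \<Rightarrow> real \<Rightarrow> ('a \<Rightarrow> 'b) \<Rightarrow> real" where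
  "Ent M b X = prob_space.entropy M b (count_space (X ` space M)) X"

definition CEnt :: "'a measure \<Rightarrow> real \<Rightarrow> ('a \<Rightarrow> 'b) \<Rightarrow> ('a \<Rightarrow> 'c) \<Rightarrow> real" where
  "CEnt M b X Y = prob_space.conditional_entropy M b
     (count_space (X ` space M)) (count_space (Y ` space M)) X Y"

definition MI :: "'a measure \<Rightarrow> real \<Rightarrow> ('a \<Rightarrow> 'b) \<Rightarrow> ('a \<Rightarrow> 'c) \<Rightarrow> real" where
  "MI M b X Y = prob_space.mutual_information M b
     (count_space (X ` space M)) (count_space (Y ` space M)) X Y"

text \<open>Messages: W k \<omega> i is the i-th symbol (i < L) of message k (1 \<le> k \<le> K).\<close>

definition Wmsg :: "nat \<Rightarrow> (nat \<Rightarrow> 'a \<Rightarrow> nat \<Rightarrow> 'f) \<Rightarrow> nat \<Rightarrow> 'a \<Rightarrow> 'f list" where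
  "Wmsg L W k \<omega> = map (W k \<omega>) [0..<L]"

definition Wall :: "nat \<Rightarrow> nat \<Rightarrow> (nat \<Rightarrow> 'a \<Rightarrow> nat \<Rightarrow> 'f) \<Rightarrow> 'a \<Rightarrow> 'f list list" where
  "Wall K L W \<omega> = map (\<lambda>k. Wmsg L W k \<omega>) [1..<K+1]"

definition Wbar :: "nat \<Rightarrow> nat \<Rightarrow> (nat \<Rightarrow> 'a \<Rightarrow> nat \<Rightarrow> 'f) \<Rightarrow> nat \<Rightarrow> 'a \<Rightarrow> 'f list list" where
  "Wbar K L W k \<omega> = map (\<lambda>j. Wmsg L W j \<omega>) (filter (\<lambda>j. j \<noteq> k) [1..<K+1])"

text \<open>Common randomness: RS \<omega> i is component i \<in> I of R_S; the user-side
  randomness for the index set U \<subseteq> I is the restriction to U.\<close>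

definition RSub :: "'i set \<Rightarrow> ('a \<Rightarrow> 'i \<Rightarrow> 'r) \<Rightarrow> 'a \<Rightarrow> ('i \<Rightarrow> 'r)" where
  "RSub U RS \<omega> = restrict (RS \<omega>) U"

definition Qall :: "nat \<Rightarrow> (nat \<Rightarrow> nat \<Rightarrow> 'i set \<Rightarrow> 'a \<Rightarrow> 'q) \<Rightarrow> nat \<Rightarrow> 'i set \<Rightarrow> 'a \<Rightarrow> 'q list" where
  "Qall N Q k U \<omega> = map (\<lambda>n. Q n k U \<omega>) [1..<N+1]"

definition admissible_RU :: "'i set \<Rightarrow> nat \<Rightarrow> 'i set \<Rightarrow> bool" where
  "admissible_RU I m U \<longleftrightarrow> U \<subseteq> I \<and> card U = m"

text \<open>Conditions (C1)-(C8), entropies in q-ary units, q = CARD('f).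
  Q n k U / A n k U are the query/answer for database n, desired message k and
  user-side randomness R_U = components U of R_S.\<close>

definition valid_scheme ::
  "'a measure \<Rightarrow> nat \<Rightarrow> nat \<Rightarrow> nat \<Rightarrow> 'i set \<Rightarrow> nat \<Rightarrow>
   (nat \<Rightarrow> 'a \<Rightarrow> nat \<Rightarrow> 'f::{finite,field}) \<Rightarrow> ('a \<Rightarrow> 'i \<Rightarrow> 'r) \<Rightarrow> ('a \<Rightarrow> 'u) \<Rightarrow>
   (nat \<Rightarrow> nat \<Rightarrow> 'i set \<Rightarrow> 'a \<Rightarrow> 'q) \<Rightarrow> (nat \<Rightarrow> nat \<Rightarrow> 'i set \<Rightarrow> 'a \<Rightarrow> 'ans) \<Rightarrow> bool" where
  "valid_scheme M N K L I m W RS F Q A \<longleftrightarrow>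
    (let b = real CARD('f) in
     \<forall>k\<in>{1..K}. \<forall>U. admissible_RU I m U \<longrightarrow>
       \<comment> \<open>C1\<close>
       MI M b (Wall K L W) (\<lambda>\<omega>. (F \<omega>, RSub I RS \<omega>, RSub U RS \<omega>)) = 0 \<and>
       \<comment> \<open>C2\<close>
       MI M b (Qall N Q k U) (\<lambda>\<omega>. (Wall K L W \<omega>, RSub (I - U) RS \<omega>)) = 0 \<and>
       \<comment> \<open>C3\<close>
       CEnt M b (Qall N Q k U) F = 0 \<and>
       \<comment> \<open>C4\<close>
       (\<forall>n\<in>{1..N}. CEnt M b (A n k U) (\<lambda>\<omega>. (Q n k U \<omega>, Wall K L W \<omega>, RSub I RS \<omega>)) = 0) \<and>
       \<comment> \<open>C5\<close>
       CEnt M b (Wmsg L W k) (\<lambda>\<omega>. (F \<omega>, Qall N A k U \<omega>, RSub U RS \<omega>)) = 0 \<and>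
       \<comment> \<open>C6\<close>
       (\<forall>k'\<in>{1..K}. \<forall>n\<in>{1..N}. \<exists>U'. admissible_RU I m U' \<and>
          Ent M b (RSub U' RS) = Ent M b (RSub U RS) \<and>
          distr M (count_space UNIV) (\<lambda>\<omega>. (Q n k U \<omega>, A n k U \<omega>, Wall K L W \<omega>, RSub I RS \<omega>)) =
          distr M (count_space UNIV) (\<lambda>\<omega>. (Q n k' U' \<omega>, A n k' U' \<omega>, Wall K L W \<omega>, RSub I RS \<omega>))) \<and>
       \<comment> \<open>C7\<close>
       MI M b (Wbar K L W k) (\<lambda>\<omega>. (F \<omega>, Qall N A k U \<omega>, RSub U RS \<omega>)) = 0 \<and>
       \<comment> \<open>C8\<close>
       MI M b (RSub (I - U) RS) (\<lambda>\<omega>. (F \<omega>, Qall N A k U \<omega>, Wmsg L W k \<omega>, RSub U RS \<omega>)) = 0)"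

end

theory Submission
  imports Defs
begin

text \<open>Since the answer A is determined by the query Q, all messages W and R_S, the
  conditional entropy H(A | Q, R_U) splits into I(A; W_k | Q, R_U) + I(A; W_{\bar k} | Q, R_U, W_k)
  + I(A; R_S | Q, R_U, W). The last term is at most H(R_S | R_U) = H(R_S) - H(R_U). The middle
  term vanishes: W_{\bar k} is independent of what the user finally holds (C7), and that
  determines W_k (C5) and Q (C3). For the first term, user privacy (C6) transfers the joint law of
  (Q, A, W) to the retrieval of some other message k', for which W_k is among the protected
  messages; so W_k is independent of (A, Q) and the term is at most H(R_U).\<close>

locale finite_information_space = information_space +
  assumes finite_space: "finite (space M)" and sets_eq_Pow: "sets M = Pow (space M)"
begin

lemma simple_function_finite [simp, intro]: "simple_function M X"
  using finite_space sets_eq_Pow by (auto simp: simple_function_def)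

lemma measurable_count_space_UNIV: "X \<in> measurable M (count_space UNIV)"
  using sets_eq_Pow by (auto simp: measurable_def)

lemma entropy_eq_sum:
  "\<H>(X) = - (\<Sum>x\<in>X`space M. prob (X -` {x} \<inter> space M) * log b (prob (X -` {x} \<inter> space M)))"
  by (rule entropy_simple_distributed[OF simple_distributedI[OF _ measure_nonneg refl]]) simp

lemma entropy_cong:
  assumes "\<And>\<omega>. \<omega> \<in> space M \<Longrightarrow> X \<omega> = Y \<omega>"
  shows "\<H>(X) = \<H>(Y)"
proof -
  have "X ` space M = Y ` space M" and "\<And>x. X -` {x} \<inter> space M = Y -` {x} \<inter> space M"
    using assms by auto
  then show ?thesis
    unfolding entropy_eq_sum by simp
qed

lemma entropy_le_if_determined:
  assumes "\<And>\<omega> \<omega>'. \<omega> \<in> space M \<Longrightarrow> \<omega>' \<in> space M \<Longrightarrow> Y \<omega> = Y \<omega>' \<Longrightarrow> X \<omega> = X \<omega>'"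
  shows "\<H>(X) \<le> \<H>(Y)"
proof -
  define g where "g y = X (SOME \<omega>. \<omega> \<in> space M \<and> Y \<omega> = y)" for y
  have "X \<omega> = (g \<circ> Y) \<omega>" if "\<omega> \<in> space M" for \<omega>
  proof -
    have "(SOME \<omega>'. \<omega>' \<in> space M \<and> Y \<omega>' = Y \<omega>) \<in> space M \<and> Y (SOME \<omega>'. \<omega>' \<in> space M \<and> Y \<omega>' = Y \<omega>) = Y \<omega>"
      using that by (metis (mono_tags, lifting) someI_ex)
    then show ?thesis
      using assms[OF that] by (auto simp: g_def)
  qed
  then have "\<H>(X) = \<H>(g \<circ> Y)"
    by (rule entropy_cong)
  also have "\<dots> \<le> \<H>(Y)"
    by (rule entropy_data_processing) simp
  finally show ?thesis .
qed

lemma entropy_eq_if_mutually_determined: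
  assumes "\<And>\<omega> \<omega>'. \<omega> \<in> space M \<Longrightarrow> \<omega>' \<in> space M \<Longrightarrow> X \<omega> = X \<omega>' \<longleftrightarrow> Y \<omega> = Y \<omega>'"
  shows "\<H>(X) = \<H>(Y)"
  using entropy_le_if_determined[of X Y] entropy_le_if_determined[of Y X] assms
  by (meson order_antisym)

lemma entropy_eq_sum_nonzero:
  assumes "\<And>x. prob (X -` {x} \<inter> space M) = P x"
  shows "\<H>(X) = - (\<Sum>x\<in>{x. P x \<noteq> 0}. P x * log b (P x))"
proof -
  have "{x. P x \<noteq> 0} \<subseteq> X ` space M"
  proof
    fix x assume "x \<in> {x. P x \<noteq> 0}"
    then have "X -` {x} \<inter> space M \<noteq> {}"
      using assms[of x] by auto
    then show "x \<in> X ` space M" by auto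
  qed
  then have "(\<Sum>x\<in>X`space M. P x * log b (P x)) = (\<Sum>x\<in>{x. P x \<noteq> 0}. P x * log b (P x))"
    using finite_space by (intro sum.mono_neutral_right) auto
  then show ?thesis
    unfolding entropy_eq_sum assms by simp
qed

lemma entropy_eq_if_distr_eq:
  assumes "distr M (count_space UNIV) T = distr M (count_space UNIV) T'"
  shows "\<H>(\<lambda>\<omega>. f (T \<omega>)) = \<H>(\<lambda>\<omega>. f (T' \<omega>))"
proof -
  have "prob ((\<lambda>\<omega>. f (S \<omega>)) -` {x} \<inter> space M) = measure (distr M (count_space UNIV) S) (f -` {x})"
    for S x
    by (subst measure_distr[OF measurable_count_space_UNIV]) (auto intro!: arg_cong[where f=prob])
  then show ?thesis
    using assms by (simp add: entropy_eq_sum_nonzero)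
qed

lemma entropy_count_space_superset:
  assumes "finite S" and "X ` space M \<subseteq> S"
  shows "entropy b (count_space S) X = \<H>(X)"
proof -
  let ?p = "\<lambda>x. prob (X -` {x} \<inter> space M)"
  let ?P = "\<lambda>x. if x \<in> X`space M then ?p x else 0"
  have "distributed M (count_space S) X ?P"
    by (rule distributed_simple_function_superset[OF _ _ assms(2,1)]) simp_all
  then have "entropy b (count_space S) X = - (\<integral>x. ?P x * log b (?P x) \<partial>count_space S)"
    by (rule entropy_distr) (auto simp: measure_nonneg)
  also have "\<dots> = - (\<Sum>x\<in>S. ?P x * log b (?P x))"
    using assms by (simp add: lebesgue_integral_count_space_finite)
  also have "(\<Sum>x\<in>S. ?P x * log b (?P x)) = (\<Sum>x\<in>X`space M. ?p x * log b (?p x))"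
    using assms by (intro sum.mono_neutral_cong_right) auto
  finally show ?thesis
    by (simp add: entropy_eq_sum)
qed

lemma mutual_information_count_space_superset:
  assumes "finite S" "X ` space M \<subseteq> S" "finite T" "Y ` space M \<subseteq> T"
  shows "mutual_information b (count_space S) (count_space T) X Y
           = \<H>(X) + \<H>(Y) - \<H>(\<lambda>\<omega>. (X \<omega>, Y \<omega>))"
proof -
  let ?Px = "\<lambda>x. if x \<in> X`space M then prob (X -` {x} \<inter> space M) else 0"
  let ?Py = "\<lambda>y. if y \<in> Y`space M then prob (Y -` {y} \<inter> space M) else 0"
  let ?XY = "\<lambda>\<omega>. (X \<omega>, Y \<omega>)"
  let ?Pxy = "\<lambda>z. if z \<in> ?XY`space M then prob (?XY -` {z} \<inter> space M) else 0"
  have prod: "count_space S \<Otimes>\<^sub>M count_space T = count_space (S \<times> T)"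
    using assms by (simp add: pair_measure_count_space)
  have "distributed M (count_space S) X ?Px"
    by (rule distributed_simple_function_superset[OF _ _ assms(2,1)]) simp_all
  moreover have "distributed M (count_space T) Y ?Py"
    by (rule distributed_simple_function_superset[OF _ _ assms(4,3)]) simp_all
  moreover have "?XY ` space M \<subseteq> S \<times> T"
    using assms by auto
  then have "distributed M (count_space S \<Otimes>\<^sub>M count_space T) ?XY ?Pxy"
    unfolding prod using assms
    by (intro distributed_simple_function_superset) simp_all
  ultimately have "mutual_information b (count_space S) (count_space T) X Y =
      entropy b (count_space S) X + entropy b (count_space T) Y
      - entropy b (count_space S \<Otimes>\<^sub>M count_space T) ?XY"
    by (intro mutual_information_eq_entropy_conditional_entropy_distr
          sigma_finite_measure_count_space_finite)
       (use assms in \<open>auto simp: prod measure_nonneg intro!: integrable_count_space\<close>)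
  also have "\<dots> = \<H>(X) + \<H>(Y) - \<H>(?XY)"
    using assms \<open>?XY ` space M \<subseteq> S \<times> T\<close> by (simp add: prod entropy_count_space_superset)
  finally show ?thesis .
qed

lemma mutual_information_eq_entropy: "\<I>(X ; Y) = \<H>(X) + \<H>(Y) - \<H>(\<lambda>\<omega>. (X \<omega>, Y \<omega>))"
  using finite_space by (intro mutual_information_count_space_superset) auto

lemma conditional_entropy_eq_entropy: "\<H>(X | Y) = \<H>(\<lambda>\<omega>. (X \<omega>, Y \<omega>)) - \<H>(Y)"
proof -
  have "\<H>(\<lambda>\<omega>. (Y \<omega>, X \<omega>)) = \<H>(Y) + \<H>(X | Y)"
    by (rule entropy_chain_rule) simp_all
  moreover have "\<H>(\<lambda>\<omega>. (Y \<omega>, X \<omega>)) = \<H>(\<lambda>\<omega>. (X \<omega>, Y \<omega>))"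
    by (rule entropy_eq_if_mutually_determined) auto
  ultimately show ?thesis by simp
qed

lemma entropy_subadditive: "\<H>(\<lambda>\<omega>. (X \<omega>, Y \<omega>)) \<le> \<H>(X) + \<H>(Y)"
  using mutual_information_nonneg_simple[of X Y] by (simp add: mutual_information_eq_entropy)

lemma entropy_submodular:
  "\<H>(\<lambda>\<omega>. (X \<omega>, Y \<omega>, Z \<omega>)) + \<H>(Z) \<le> \<H>(\<lambda>\<omega>. (X \<omega>, Z \<omega>)) + \<H>(\<lambda>\<omega>. (Y \<omega>, Z \<omega>))"
proof -
  have prod: "count_space (Y ` space M) \<Otimes>\<^sub>M count_space (Z ` space M)
      = count_space (Y ` space M \<times> Z ` space M)"
    using finite_space by (simp add: pair_measure_count_space)
  have "mutual_information b (count_space (X ` space M)) (count_space (Y ` space M \<times> Z ` space M))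
      X (\<lambda>\<omega>. (Y \<omega>, Z \<omega>)) = \<H>(X) + \<H>(\<lambda>\<omega>. (Y \<omega>, Z \<omega>)) - \<H>(\<lambda>\<omega>. (X \<omega>, Y \<omega>, Z \<omega>))"
    using finite_space by (intro mutual_information_count_space_superset) auto
  moreover have "0 \<le> \<I>(X ; Y | Z)"
    by (rule conditional_mutual_information_nonneg) simp_all
  ultimately show ?thesis
    unfolding conditional_mutual_information_def prod mutual_information_eq_entropy by simp
qed

lemma conditional_entropy_eq_0_if_determined:
  assumes "\<And>\<omega> \<omega>'. \<omega> \<in> space M \<Longrightarrow> \<omega>' \<in> space M \<Longrightarrow> Y \<omega> = Y \<omega>' \<Longrightarrow> X \<omega> = X \<omega>'"
  shows "\<H>(X | Y) = 0"
proof -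
  have "\<H>(\<lambda>\<omega>. (X \<omega>, Y \<omega>)) = \<H>(Y)"
    using assms by (intro entropy_eq_if_mutually_determined) blast
  then show ?thesis
    by (simp add: conditional_entropy_eq_entropy)
qed

lemma conditional_entropy_le_if_determined:
  assumes "\<And>\<omega> \<omega>'. \<omega> \<in> space M \<Longrightarrow> \<omega>' \<in> space M \<Longrightarrow> Z \<omega> = Z \<omega>' \<Longrightarrow> V \<omega> = V \<omega>'"
  shows "\<H>(Y | Z) \<le> \<H>(Y | V)"
proof -
  have "\<H>(\<lambda>\<omega>. (Y \<omega>, Z \<omega>, V \<omega>)) = \<H>(\<lambda>\<omega>. (Y \<omega>, Z \<omega>))"
    using assms by (intro entropy_eq_if_mutually_determined) blast
  moreover have "\<H>(\<lambda>\<omega>. (Z \<omega>, V \<omega>)) = \<H>(Z)"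
    using assms by (intro entropy_eq_if_mutually_determined) blast
  ultimately show ?thesis
    using entropy_submodular[of Y Z V] by (simp add: conditional_entropy_eq_entropy)
qed

lemma entropy_pair_eq_if_conditional_entropy_eq_0:
  assumes "\<H>(D | C) = 0"
  shows "\<H>(\<lambda>\<omega>. (Y \<omega>, D \<omega>, C \<omega>)) = \<H>(\<lambda>\<omega>. (Y \<omega>, C \<omega>))"
proof (rule antisym)
  show "\<H>(\<lambda>\<omega>. (Y \<omega>, D \<omega>, C \<omega>)) \<le> \<H>(\<lambda>\<omega>. (Y \<omega>, C \<omega>))"
    using entropy_submodular[of Y D C] assms by (simp add: conditional_entropy_eq_entropy)
  show "\<H>(\<lambda>\<omega>. (Y \<omega>, C \<omega>)) \<le> \<H>(\<lambda>\<omega>. (Y \<omega>, D \<omega>, C \<omega>))"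
    by (rule entropy_le_if_determined) auto
qed

lemma conditional_entropy_eq_0_pair:
  assumes "\<H>(X | Z) = 0" and "\<H>(Y | Z) = 0"
  shows "\<H>(\<lambda>\<omega>. (X \<omega>, Y \<omega>) | Z) = 0"
proof -
  have "\<H>(\<lambda>\<omega>. ((X \<omega>, Y \<omega>), Z \<omega>)) = \<H>(\<lambda>\<omega>. (X \<omega>, Y \<omega>, Z \<omega>))"
    by (rule entropy_eq_if_mutually_determined) auto
  also have "\<dots> = \<H>(\<lambda>\<omega>. (X \<omega>, Z \<omega>))"
    using assms(2) by (rule entropy_pair_eq_if_conditional_entropy_eq_0)
  finally show ?thesis
    using assms(1) by (simp add: conditional_entropy_eq_entropy)
qed

lemma conditional_entropy_eq_0_trans:
  assumes "\<H>(X | Y) = 0" and "\<H>(Y | Z) = 0"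
  shows "\<H>(X | Z) = 0"
proof -
  have "\<H>(X | Z) \<le> \<H>(X | \<lambda>\<omega>. (Y \<omega>, Z \<omega>)) + \<H>(Y | Z)"
  proof -
    have "\<H>(\<lambda>\<omega>. (X \<omega>, Z \<omega>)) \<le> \<H>(\<lambda>\<omega>. (X \<omega>, Y \<omega>, Z \<omega>))"
      by (rule entropy_le_if_determined) auto
    then show ?thesis
      by (simp add: conditional_entropy_eq_entropy)
  qed
  also have "\<H>(X | \<lambda>\<omega>. (Y \<omega>, Z \<omega>)) \<le> \<H>(X | Y)"
    by (rule conditional_entropy_le_if_determined) auto
  finally show ?thesis
    using assms conditional_entropy_nonneg[of X Z] by simp
qed

lemma mutual_information_commute: "\<I>(X ; Y) = \<I>(Y ; X)"
proof -
  have "\<H>(\<lambda>\<omega>. (X \<omega>, Y \<omega>)) = \<H>(\<lambda>\<omega>. (Y \<omega>, X \<omega>))"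
    by (rule entropy_eq_if_mutually_determined) auto
  then show ?thesis
    by (simp add: mutual_information_eq_entropy)
qed

lemma mutual_information_le_if_determined:
  assumes "\<And>\<omega> \<omega>'. \<omega> \<in> space M \<Longrightarrow> \<omega>' \<in> space M \<Longrightarrow> Y \<omega> = Y \<omega>' \<Longrightarrow> X \<omega> = X \<omega>'"
    and "\<And>\<omega> \<omega>'. \<omega> \<in> space M \<Longrightarrow> \<omega>' \<in> space M \<Longrightarrow> Z \<omega> = Z \<omega>' \<Longrightarrow> V \<omega> = V \<omega>'"
  shows "\<I>(X ; V) \<le> \<I>(Y ; Z)"
proof -
  have "\<I>(X ; V) = \<H>(X) - \<H>(X | V)"
    by (simp add: mutual_information_eq_entropy_conditional_entropy)
  also have "\<dots> \<le> \<H>(X) - \<H>(X | Z)"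
    using conditional_entropy_le_if_determined[of Z V X, OF assms(2)] by linarith
  also have "\<dots> = \<I>(Z ; X)"
    by (simp add: mutual_information_commute[of Z X] mutual_information_eq_entropy_conditional_entropy)
  also have "\<dots> = \<H>(Z) - \<H>(Z | X)"
    by (simp add: mutual_information_eq_entropy_conditional_entropy)
  also have "\<dots> \<le> \<H>(Z) - \<H>(Z | Y)"
    using conditional_entropy_le_if_determined[of Y X Z, OF assms(1)] by linarith
  also have "\<dots> = \<I>(Y ; Z)"
    by (simp add: mutual_information_commute[of Y Z] mutual_information_eq_entropy_conditional_entropy)
  finally show ?thesis .
qed

lemma mutual_information_data_processing:
  assumes "\<And>\<omega> \<omega>'. \<omega> \<in> space M \<Longrightarrow> \<omega>' \<in> space M \<Longrightarrow> Y \<omega> = Y \<omega>' \<Longrightarrow> X \<omega> = X \<omega>'"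
    and "\<H>(V | Z) = 0"
  shows "\<I>(X ; V) \<le> \<I>(Y ; Z)"
proof -
  have "\<I>(X ; V) \<le> \<I>(Y ; \<lambda>\<omega>. (V \<omega>, Z \<omega>))"
    using assms(1) by (rule mutual_information_le_if_determined) auto
  also have "\<dots> = \<I>(Y ; Z)"
    using assms(2) entropy_pair_eq_if_conditional_entropy_eq_0[OF assms(2), of Y]
    by (simp add: mutual_information_eq_entropy conditional_entropy_eq_entropy)
  finally show ?thesis .
qed

corollary mutual_information_eq_0_data_processing:
  assumes "\<I>(Y ; Z) = 0"
    and "\<And>\<omega> \<omega>'. \<omega> \<in> space M \<Longrightarrow> \<omega>' \<in> space M \<Longrightarrow> Y \<omega> = Y \<omega>' \<Longrightarrow> X \<omega> = X \<omega>'"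
    and "\<H>(V | Z) = 0"
  shows "\<I>(X ; V) = 0"
proof -
  have "\<I>(X ; V) \<le> \<I>(Y ; Z)"
    using assms(2,3) by (rule mutual_information_data_processing)
  then show ?thesis
    using assms(1) mutual_information_nonneg_simple[of X V] by simp
qed

lemma mutual_information_eq_if_distr_eq:
  assumes "distr M (count_space UNIV) T = distr M (count_space UNIV) T'"
  shows "\<I>(\<lambda>\<omega>. f (T \<omega>) ; \<lambda>\<omega>. g (T \<omega>)) = \<I>(\<lambda>\<omega>. f (T' \<omega>) ; \<lambda>\<omega>. g (T' \<omega>))"
  using entropy_eq_if_distr_eq[OF assms, of f] entropy_eq_if_distr_eq[OF assms, of g]
    entropy_eq_if_distr_eq[OF assms, of "\<lambda>t. (f t, g t)"]
  by (simp add: mutual_information_eq_entropy)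

lemma conditional_entropy_le_entropy_if_independent:
  assumes answer: "\<H>(A | \<lambda>\<omega>. (Q \<omega>, X \<omega>, Y \<omega>, R \<omega>)) = 0"
    and user: "\<And>\<omega> \<omega>'. \<omega> \<in> space M \<Longrightarrow> \<omega>' \<in> space M \<Longrightarrow> R \<omega> = R \<omega>' \<Longrightarrow> U \<omega> = U \<omega>'"
    and indep_X: "\<I>(X ; \<lambda>\<omega>. (A \<omega>, Q \<omega>)) = 0"
    and indep_Y: "\<I>(Y ; \<lambda>\<omega>. (X \<omega>, A \<omega>, Q \<omega>, U \<omega>)) = 0"
  shows "\<H>(A | \<lambda>\<omega>. (Q \<omega>, U \<omega>)) \<le> \<H>(R)"
proof -
  have "\<H>(\<lambda>\<omega>. (A \<omega>, Q \<omega>, U \<omega>)) = \<H>(\<lambda>\<omega>. ((A \<omega>, Q \<omega>), U \<omega>))"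
    by (rule entropy_eq_if_mutually_determined) auto
  also have "\<dots> \<le> \<H>(\<lambda>\<omega>. (A \<omega>, Q \<omega>)) + \<H>(U)"
    by (rule entropy_subadditive)
  also have "\<H>(\<lambda>\<omega>. (A \<omega>, Q \<omega>)) = \<H>(\<lambda>\<omega>. (X \<omega>, A \<omega>, Q \<omega>)) - \<H>(X)"
    using indep_X by (simp add: mutual_information_eq_entropy)
  also have "\<H>(\<lambda>\<omega>. (X \<omega>, A \<omega>, Q \<omega>)) \<le> \<H>(\<lambda>\<omega>. (X \<omega>, A \<omega>, Q \<omega>, U \<omega>))"
    by (rule entropy_le_if_determined) auto
  also have "\<H>(\<lambda>\<omega>. (X \<omega>, A \<omega>, Q \<omega>, U \<omega>)) = \<H>(\<lambda>\<omega>. (Y \<omega>, X \<omega>, A \<omega>, Q \<omega>, U \<omega>)) - \<H>(Y)"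
    using indep_Y by (simp add: mutual_information_eq_entropy)
  also have "\<H>(\<lambda>\<omega>. (Y \<omega>, X \<omega>, A \<omega>, Q \<omega>, U \<omega>)) \<le> \<H>(\<lambda>\<omega>. (A \<omega>, Q \<omega>, X \<omega>, Y \<omega>, R \<omega>))"
    using user by (intro entropy_le_if_determined) blast
  also have "\<dots> = \<H>(\<lambda>\<omega>. (Q \<omega>, X \<omega>, Y \<omega>, R \<omega>))"
    using answer by (simp add: conditional_entropy_eq_entropy)
  also have "\<dots> \<le> \<H>(R) - \<H>(U) + \<H>(\<lambda>\<omega>. ((X \<omega>, Y \<omega>), Q \<omega>, U \<omega>))"
  proof -
    have "\<H>(\<lambda>\<omega>. (R \<omega>, (Q \<omega>, X \<omega>, Y \<omega>), U \<omega>)) = \<H>(\<lambda>\<omega>. (Q \<omega>, X \<omega>, Y \<omega>, R \<omega>))"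
      and "\<H>(\<lambda>\<omega>. (R \<omega>, U \<omega>)) = \<H>(R)"
      by (rule entropy_eq_if_mutually_determined; use user in blast)+
    moreover have "\<H>(\<lambda>\<omega>. ((Q \<omega>, X \<omega>, Y \<omega>), U \<omega>)) = \<H>(\<lambda>\<omega>. ((X \<omega>, Y \<omega>), Q \<omega>, U \<omega>))"
      by (rule entropy_eq_if_mutually_determined) auto
    ultimately show ?thesis
      using entropy_submodular[of R "\<lambda>\<omega>. (Q \<omega>, X \<omega>, Y \<omega>)" U] by simp
  qed
  also have "\<H>(\<lambda>\<omega>. ((X \<omega>, Y \<omega>), Q \<omega>, U \<omega>)) \<le> \<H>(X) + \<H>(Y) + \<H>(\<lambda>\<omega>. (Q \<omega>, U \<omega>))"
    using entropy_subadditive[of "\<lambda>\<omega>. (X \<omega>, Y \<omega>)" "\<lambda>\<omega>. (Q \<omega>, U \<omega>)"]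
      entropy_subadditive[of X Y] by simp
  finally show ?thesis
    by (simp add: conditional_entropy_eq_entropy)
qed

end

lemma Qall_eq_imp_eq:
  assumes "Qall N X k U \<omega> = Qall N X k U \<omega>'" and "n \<in> {1..N}"
  shows "X n k U \<omega> = X n k U \<omega>'"
proof -
  have "n \<in> set [1..<N+1]"
    using assms(2) by (simp del: upt_Suc)
  then show ?thesis
    using assms(1) unfolding Qall_def map_eq_conv by blast
qed

lemma Wmsg_eq_nth: "k \<in> {1..K} \<Longrightarrow> Wmsg L W k = (\<lambda>\<omega>. Wall K L W \<omega> ! (k - 1))"
  unfolding Wall_def by (auto simp del: upt_Suc simp: nth_upt)

lemma Wbar_eq_imp_Wmsg_eq:
  "Wbar K L W k' \<omega> = Wbar K L W k' \<omega>' \<Longrightarrow> k \<noteq> k' \<Longrightarrow> k \<in> {1..K} \<Longrightarrow> Wmsg L W k \<omega> = Wmsg L W k \<omega>'"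
  unfolding Wbar_def map_eq_conv by auto

lemma Wall_eq_if_Wmsg_Wbar_eq:
  "Wmsg L W k \<omega> = Wmsg L W k \<omega>' \<Longrightarrow> Wbar K L W k \<omega> = Wbar K L W k \<omega>' \<Longrightarrow> Wall K L W \<omega> = Wall K L W \<omega>'"
  unfolding Wall_def Wbar_def map_eq_conv by auto

lemma RSub_eq_if_subset: "RSub I RS \<omega> = RSub I RS \<omega>' \<Longrightarrow> U \<subseteq> I \<Longrightarrow> RSub U RS \<omega> = RSub U RS \<omega>'"
  unfolding RSub_def by (metis restrict_restrict inf.absorb_iff2)

context finite_information_space
begin

lemma query_determined:
  assumes "n \<in> {1..N}" and "\<H>(Qall N Q k U | F) = 0"
  shows "\<H>(Q n k U | \<lambda>\<omega>. (F \<omega>, Z \<omega>)) = 0"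
proof -
  have "\<H>(Q n k U | Qall N Q k U) = 0"
    using assms(1) by (intro conditional_entropy_eq_0_if_determined) (rule Qall_eq_imp_eq)
  moreover have "\<H>(F | \<lambda>\<omega>. (F \<omega>, Z \<omega>)) = 0"
    by (rule conditional_entropy_eq_0_if_determined) auto
  ultimately show ?thesis
    using assms(2) by (blast intro: conditional_entropy_eq_0_trans)
qed

lemma desired_message_independent_of_answer:
  assumes "k \<in> {1..K}" and "k \<noteq> k'" and "n \<in> {1..N}"
    and query': "\<H>(Qall N Q k' U' | F) = 0"
    and indep': "\<I>(Wbar K L W k' ; \<lambda>\<omega>. (F \<omega>, Qall N A k' U' \<omega>, V \<omega>)) = 0"
    and same_distr: "distr M (count_space UNIV) (\<lambda>\<omega>. (Q n k U \<omega>, A n k U \<omega>, Wall K L W \<omega>, R \<omega>))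
      = distr M (count_space UNIV) (\<lambda>\<omega>. (Q n k' U' \<omega>, A n k' U' \<omega>, Wall K L W \<omega>, R \<omega>))"
  shows "\<I>(Wmsg L W k ; \<lambda>\<omega>. (A n k U \<omega>, Q n k U \<omega>)) = 0"
proof -
  have "\<I>(Wmsg L W k ; \<lambda>\<omega>. (A n k U \<omega>, Q n k U \<omega>))
      = \<I>(Wmsg L W k ; \<lambda>\<omega>. (A n k' U' \<omega>, Q n k' U' \<omega>))"
    using mutual_information_eq_if_distr_eq[OF same_distr,
        of "\<lambda>(q, a, w, r). w ! (k - 1)" "\<lambda>(q, a, w, r). (a, q)"]
    by (simp add: Wmsg_eq_nth[OF assms(1)])
  also have "\<dots> = 0"
  proof (rule mutual_information_eq_0_data_processing[OF indep'])
    show "Wmsg L W k \<omega> = Wmsg L W k \<omega>'" if "Wbar K L W k' \<omega> = Wbar K L W k' \<omega>'" for \<omega> \<omega>'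
      using that assms(2,1) by (rule Wbar_eq_imp_Wmsg_eq)
    have "\<H>(A n k' U' | \<lambda>\<omega>. (F \<omega>, Qall N A k' U' \<omega>, V \<omega>)) = 0"
      using assms(3) by (intro conditional_entropy_eq_0_if_determined) (auto dest: Qall_eq_imp_eq)
    then show "\<H>(\<lambda>\<omega>. (A n k' U' \<omega>, Q n k' U' \<omega>) | \<lambda>\<omega>. (F \<omega>, Qall N A k' U' \<omega>, V \<omega>)) = 0"
      using query_determined[OF assms(3) query'] by (rule conditional_entropy_eq_0_pair)
  qed
  finally show ?thesis .
qed

lemma other_messages_independent:
  assumes "n \<in> {1..N}" and query: "\<H>(Qall N Q k U | F) = 0"
    and desired: "\<H>(Wmsg L W k | \<lambda>\<omega>. (F \<omega>, Qall N A k U \<omega>, V \<omega>)) = 0"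
    and indep: "\<I>(Wbar K L W k ; \<lambda>\<omega>. (F \<omega>, Qall N A k U \<omega>, V \<omega>)) = 0"
  shows "\<I>(Wbar K L W k ; \<lambda>\<omega>. (Wmsg L W k \<omega>, A n k U \<omega>, Q n k U \<omega>, V \<omega>)) = 0"
proof -
  let ?Z = "\<lambda>\<omega>. (F \<omega>, Qall N A k U \<omega>, V \<omega>)"
  have "\<H>(A n k U | ?Z) = 0"
    using assms(1) by (intro conditional_entropy_eq_0_if_determined) (auto dest: Qall_eq_imp_eq)
  moreover have "\<H>(V | ?Z) = 0"
    by (rule conditional_entropy_eq_0_if_determined) auto
  ultimately have determined: "\<H>(\<lambda>\<omega>. (Wmsg L W k \<omega>, A n k U \<omega>, Q n k U \<omega>, V \<omega>) | ?Z) = 0"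
    using desired query_determined[OF assms(1) query]
    by (intro conditional_entropy_eq_0_pair)
  show ?thesis
    by (rule mutual_information_eq_0_data_processing[OF indep _ determined]) simp
qed

lemma answer_entropy_le_randomness:
  assumes "k \<in> {1..K}" and "k' \<in> {1..K}" and "k \<noteq> k'" and "n \<in> {1..N}" and "U \<subseteq> I"
    and query: "\<H>(Qall N Q k U | F) = 0"
    and answer: "\<H>(A n k U | \<lambda>\<omega>. (Q n k U \<omega>, Wall K L W \<omega>, RSub I RS \<omega>)) = 0"
    and desired: "\<H>(Wmsg L W k | \<lambda>\<omega>. (F \<omega>, Qall N A k U \<omega>, RSub U RS \<omega>)) = 0"
    and indep: "\<I>(Wbar K L W k ; \<lambda>\<omega>. (F \<omega>, Qall N A k U \<omega>, RSub U RS \<omega>)) = 0"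
    and query': "\<H>(Qall N Q k' U' | F) = 0"
    and indep': "\<I>(Wbar K L W k' ; \<lambda>\<omega>. (F \<omega>, Qall N A k' U' \<omega>, RSub U' RS \<omega>)) = 0"
    and same_distr: "distr M (count_space UNIV) (\<lambda>\<omega>. (Q n k U \<omega>, A n k U \<omega>, Wall K L W \<omega>, RSub I RS \<omega>))
      = distr M (count_space UNIV) (\<lambda>\<omega>. (Q n k' U' \<omega>, A n k' U' \<omega>, Wall K L W \<omega>, RSub I RS \<omega>))"
  shows "\<H>(A n k U | \<lambda>\<omega>. (Q n k U \<omega>, RSub U RS \<omega>)) \<le> \<H>(RSub I RS)"
proof (rule conditional_entropy_le_entropy_if_independent)
  show "\<H>(A n k U | \<lambda>\<omega>. (Q n k U \<omega>, Wmsg L W k \<omega>, Wbar K L W k \<omega>, RSub I RS \<omega>)) = 0"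
    using answer by (rule conditional_entropy_eq_0_trans)
      (intro conditional_entropy_eq_0_if_determined, auto intro: Wall_eq_if_Wmsg_Wbar_eq)
  show "RSub U RS \<omega> = RSub U RS \<omega>'" if "RSub I RS \<omega> = RSub I RS \<omega>'" for \<omega> \<omega>'
    using that assms(5) by (rule RSub_eq_if_subset)
  show "\<I>(Wmsg L W k ; \<lambda>\<omega>. (A n k U \<omega>, Q n k U \<omega>)) = 0"
    using assms(1,3,4) query' indep' same_distr by (rule desired_message_independent_of_answer)
  show "\<I>(Wbar K L W k ; \<lambda>\<omega>. (Wmsg L W k \<omega>, A n k U \<omega>, Q n k U \<omega>, RSub U RS \<omega>)) = 0"
    using assms(4) query desired indep by (rule other_messages_independent)
qed

end

lemma valid_schemeD:
  fixes W :: "nat \<Rightarrow> 'a \<Rightarrow> nat \<Rightarrow> 'f::{finite,field}"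
  assumes "valid_scheme M N K L I m W RS F Q A"
    and "k \<in> {1..K}" and "admissible_RU I m U" and "n \<in> {1..N}"
  shows "CEnt M (real CARD('f)) (Qall N Q k U) F = 0"
    and "CEnt M (real CARD('f)) (A n k U) (\<lambda>\<omega>. (Q n k U \<omega>, Wall K L W \<omega>, RSub I RS \<omega>)) = 0"
    and "CEnt M (real CARD('f)) (Wmsg L W k) (\<lambda>\<omega>. (F \<omega>, Qall N A k U \<omega>, RSub U RS \<omega>)) = 0"
    and "MI M (real CARD('f)) (Wbar K L W k) (\<lambda>\<omega>. (F \<omega>, Qall N A k U \<omega>, RSub U RS \<omega>)) = 0"
    and "k' \<in> {1..K} \<Longrightarrow> \<exists>U'. admissible_RU I m U' \<and>
          distr M (count_space UNIV) (\<lambda>\<omega>. (Q n k U \<omega>, A n k U \<omega>, Wall K L W \<omega>, RSub I RS \<omega>)) =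
          distr M (count_space UNIV) (\<lambda>\<omega>. (Q n k' U' \<omega>, A n k' U' \<omega>, Wall K L W \<omega>, RSub I RS \<omega>))"
  using assms(1)[unfolded valid_scheme_def Let_def, rule_format, OF assms(2,3)] assms(4)
  by blast+

theorem mainTheorem13:
  fixes M :: "'a measure" and N K L m :: nat and I :: "'i set"
    and W :: "nat \<Rightarrow> 'a \<Rightarrow> nat \<Rightarrow> 'f::{finite,field}"
    and RS :: "'a \<Rightarrow> 'i \<Rightarrow> 'r" and F :: "'a \<Rightarrow> 'u"
    and Q :: "nat \<Rightarrow> nat \<Rightarrow> 'i set \<Rightarrow> 'a \<Rightarrow> 'q"
    and A :: "nat \<Rightarrow> nat \<Rightarrow> 'i set \<Rightarrow> 'a \<Rightarrow> 'ans"
  assumes "prob_space M" and "finite (space M)" and "sets M = Pow (space M)"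
    and "N \<ge> 1" and "K \<ge> 2" and "finite I" and "m \<le> card I"
    and "\<forall>w. length w = K \<and> (\<forall>x\<in>set w. length x = L) \<longrightarrow>
           measure M {\<omega> \<in> space M. Wall K L W \<omega> = w} = 1 / real CARD('f) ^ (K * L)"
    and "valid_scheme M N K L I m W RS F Q A"
    and "n \<in> {1..N}" and "k \<in> {1..K}" and "admissible_RU I m U"
  shows "0 \<ge> CEnt M (real CARD('f)) (A n k U) (\<lambda>\<omega>. (Q n k U \<omega>, RSub U RS \<omega>))
              - Ent M (real CARD('f)) (RSub I RS)"
proof -
  have "card {0::'f, 1} \<le> CARD('f)"
    by (rule card_mono) auto
  then have "1 < real CARD('f)"
    by simp
  with assms(1-3) interpret finite_information_space M "real CARD('f)"
    by (intro finite_information_space.intro finite_information_space_axioms.intro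
        information_space.intro information_space_axioms.intro)
  define k' where "k' = (if k = 1 then 2 else 1 :: nat)"
  have k': "k' \<in> {1..K}" "k \<noteq> k'"
    using assms(5,11) by (auto simp: k'_def)
  obtain U' where U': "admissible_RU I m U'" and same_distr:
    "distr M (count_space UNIV) (\<lambda>\<omega>. (Q n k U \<omega>, A n k U \<omega>, Wall K L W \<omega>, RSub I RS \<omega>)) =
     distr M (count_space UNIV) (\<lambda>\<omega>. (Q n k' U' \<omega>, A n k' U' \<omega>, Wall K L W \<omega>, RSub I RS \<omega>))"
    using valid_schemeD(5)[OF assms(9,11,12,10) k'(1)] by blast
  have "U \<subseteq> I"
    using assms(12) by (simp add: admissible_RU_def)
  note conditions = valid_schemeD[OF assms(9,11,12,10), unfolded CEnt_def MI_def]
  note conditions' = valid_schemeD[OF assms(9) k'(1) U' assms(10), unfolded CEnt_def MI_def]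
  show ?thesis
    unfolding CEnt_def Ent_def
    using answer_entropy_le_randomness[OF assms(11) k' assms(10) \<open>U \<subseteq> I\<close> conditions(1-4)
        conditions'(1,4) same_distr]
    by simp
qed

end
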